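(* Let $X_1,\dots,X_n$ ($n\ge 1$) and $Y$ be jointly distributed discrete random variables with $I(\mathbf X;Y)>0$, where $\mathbf X=(X_1,\dots,X_n)$, and let $\Pi$ be any partial information decomposition (as defined in the context). Then $$\mathrm{DRSI}(\mathbf X;Y)=(1-\bar v)\,I(\mathbf X;Y).$$
   Context: Notation: $[n]=\{1,\dots,n\}$. For $\mathbf a\subseteq[n]$, $X_{\mathbf a}=(X_i)_{i\in\mathbf a}$. Antichains: $\mathcal A_n$ is the set of all nonempty collections $\alpha$ of nonempty subsets of $[n]$ such that no element of $\alpha$ is a proper subset of another element of $\alpha$. Partial information decomposition (PID): any function $\Pi:\mathcal A_n\to\mathbb R$ satisfying, for every nonempty $\mathbf a\subseteq[n]$, $$I(X_{\mathbf a};Y)=\sum_{\alpha\in\mathcal A_n:\ \exists \mathbf b\in\alpha,\ \mathbf b\subseteq \mathbf a}\Pi(\alpha).$$ Degree of vulnerability: $v(\alpha)=|\{i\in[n]: i\in\mathbf b\text{ for all }\mathbf b\in\alpha\}|$. $k$-vulnerable information: $I_{\mathrm v}^{(k)}(\mathbf X;Y)=\sum_{\alpha:\ v(\alpha)=k}\Pi(\alpha)$. Average degree of vulnerability: $\bar v=\sum_{j=0}^n j\, I_{\mathrm v}^{(j)}(\mathbf X;Y)/I(\mathbf X;Y)$. Dual redundancy-synergy index: $\mathrm{DRSI}(\mathbf X;Y)=I_{\mathrm v}^{(0)}(\mathbf X;Y)-\sum_{k=2}^n (k-1)\,I_{\mathrm v}^{(k)}(\mathbf X;Y)$. *)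

theory Defs
  imports "HOL-Probability.Probability"
begin

definition antichains :: "nat \<Rightarrow> nat set set set" where
  "antichains n = {\<alpha>. \<alpha> \<noteq> {} \<and> (\<forall>b\<in>\<alpha>. b \<noteq> {} \<and> b \<subseteq> {1..n}) \<and>
                      (\<forall>b\<in>\<alpha>. \<forall>c\<in>\<alpha>. \<not> (b \<subset> c))}"

definition subvec :: "(nat \<Rightarrow> 'o \<Rightarrow> 'x) \<Rightarrow> nat set \<Rightarrow> 'o \<Rightarrow> 'x list" where
  "subvec X a = (\<lambda>\<omega>. map (\<lambda>i. X i \<omega>) (sorted_list_of_set a))"

definition MI :: "real \<Rightarrow> 'o pmf \<Rightarrow> (nat \<Rightarrow> 'o \<Rightarrow> 'x::countable) \<Rightarrow> ('o \<Rightarrow> 'y::countable)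
                   \<Rightarrow> nat set \<Rightarrow> real" where
  "MI b p X Y a = prob_space.mutual_information (measure_pmf p) b
      (count_space UNIV) (count_space UNIV) (subvec X a) Y"

definition is_PID :: "nat \<Rightarrow> (nat set \<Rightarrow> real) \<Rightarrow> (nat set set \<Rightarrow> real) \<Rightarrow> bool" where
  "is_PID n I PI \<longleftrightarrow> (\<forall>a. a \<noteq> {} \<and> a \<subseteq> {1..n} \<longrightarrow>
      I a = (\<Sum>\<alpha>\<in>{\<alpha>\<in>antichains n. \<exists>b\<in>\<alpha>. b \<subseteq> a}. PI \<alpha>))"

definition vuln :: "nat \<Rightarrow> nat set set \<Rightarrow> nat" where
  "vuln n \<alpha> = card {i\<in>{1..n}. \<forall>b\<in>\<alpha>. i \<in> b}"

definition Iv :: "nat \<Rightarrow> (nat set set \<Rightarrow> real) \<Rightarrow> nat \<Rightarrow> real" where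
  "Iv n PI k = (\<Sum>\<alpha>\<in>{\<alpha>\<in>antichains n. vuln n \<alpha> = k}. PI \<alpha>)"

definition avg_vuln :: "nat \<Rightarrow> (nat set set \<Rightarrow> real) \<Rightarrow> real \<Rightarrow> real" where
  "avg_vuln n PI Itot = (\<Sum>j=0..n. real j * Iv n PI j) / Itot"

definition DRSI :: "nat \<Rightarrow> (nat set set \<Rightarrow> real) \<Rightarrow> real" where
  "DRSI n PI = Iv n PI 0 - (\<Sum>k=2..n. (real k - 1) * Iv n PI k)"

end

theory Submission
  imports Defs
begin

text \<open>Every antichain contains a subset of [n], so the PID equation for the full index set
  says that the atoms sum to I(X;Y); grouping them by degree of vulnerability gives
  I(X;Y) = sum_j Iv_j. Hence (1 - avg_vuln) I(X;Y) = sum_j (1 - j) Iv_j, in which the term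
  j = 1 vanishes and what remains is the DRSI. Nothing about mutual information is used beyond
  I(X;Y) \<noteq> 0.\<close>

lemma finite_antichains: "finite (antichains n)"
proof (rule finite_subset)
  show "antichains n \<subseteq> Pow (Pow {1..n})"
    unfolding antichains_def by auto
qed simp

lemma vuln_le: "vuln n \<alpha> \<le> n"
proof -
  have "vuln n \<alpha> \<le> card {1..n}"
    unfolding vuln_def by (rule card_mono) auto
  then show ?thesis by simp
qed

lemma sum_antichains_eq_sum_Iv: "sum PI (antichains n) = (\<Sum>j=0..n. Iv n PI j)"
  unfolding Iv_def
  by (rule sum.group[symmetric]) (auto simp: finite_antichains vuln_le)

lemma is_PID_total:
  assumes "is_PID n I PI" and "n \<ge> 1"
  shows "I {1..n} = (\<Sum>j=0..n. Iv n PI j)"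
proof -
  have "{\<alpha>\<in>antichains n. \<exists>c\<in>\<alpha>. c \<subseteq> {1..n}} = antichains n"
    unfolding antichains_def by auto
  moreover have "{1..n} \<noteq> {}" using \<open>n \<ge> 1\<close> by simp
  ultimately have "I {1..n} = sum PI (antichains n)"
    using assms(1) unfolding is_PID_def by auto
  then show ?thesis by (simp add: sum_antichains_eq_sum_Iv)
qed

lemma DRSI_eq_sum_Iv:
  assumes "n \<ge> 1"
  shows "DRSI n PI = (\<Sum>j=0..n. (1 - real j) * Iv n PI j)"
proof -
  have "{0..n} = insert 0 (insert 1 {2..n})"
    using assms by auto
  then have "(\<Sum>j=0..n. (1 - real j) * Iv n PI j) = Iv n PI 0 + (\<Sum>j=2..n. (1 - real j) * Iv n PI j)"
    by simp
  also have "\<dots> = DRSI n PI"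
    unfolding DRSI_def by (simp add: sum_negf[symmetric] left_diff_distrib)
  finally show ?thesis ..
qed

lemma DRSI_eq_one_minus_avg_vuln:
  assumes "is_PID n I PI" and "n \<ge> 1" and "I {1..n} \<noteq> 0"
  shows "DRSI n PI = (1 - avg_vuln n PI (I {1..n})) * I {1..n}"
proof -
  have "(1 - avg_vuln n PI (I {1..n})) * I {1..n} = I {1..n} - (\<Sum>j=0..n. real j * Iv n PI j)"
    unfolding avg_vuln_def using assms(3) by (simp add: field_simps)
  also have "\<dots> = (\<Sum>j=0..n. (1 - real j) * Iv n PI j)"
    unfolding is_PID_total[OF assms(1,2)] by (simp add: sum_subtractf[symmetric] algebra_simps)
  also have "\<dots> = DRSI n PI"
    using DRSI_eq_sum_Iv[OF assms(2)] by simp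
  finally show ?thesis ..
qed

theorem corollary2:
  fixes p :: "'o pmf" and X :: "nat \<Rightarrow> 'o \<Rightarrow> 'x::countable" and Y :: "'o \<Rightarrow> 'y::countable"
    and n :: nat and b :: real and PI :: "nat set set \<Rightarrow> real"
  assumes "n \<ge> 1" and "b > 1"
    and "MI b p X Y {1..n} > 0"
    and "is_PID n (MI b p X Y) PI"
  shows "DRSI n PI = (1 - avg_vuln n PI (MI b p X Y {1..n})) * MI b p X Y {1..n}"
  using DRSI_eq_one_minus_avg_vuln[OF assms(4,1)] assms(3) by simp

end
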